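(* The game $G_{FL}=(\omega^{<\omega},c_{00}(\omega))$ has the following three properties, and any game $G=(T,A)$ with these three properties is isomorphic in $\mathbf{Games}_A$ to $G_{FL}$: (1) $T$ and $A$ are countable; (2) every finite game admits a game embedding into $G$; (3) $G$ is ultrahomogeneous with respect to $(\mathrm{emb},\mathbf{FinGame})$, i.e. for every finite game $C$ and all game embeddings $f,g\colon C\to G$ there is an automorphism $u$ of $G$ in $\mathbf{Games}_A$ with $u\circ f=g$.
   Context: A game tree is $T\subseteq M^{<\omega}$ (some set $M$) closed under initial segments such that every $t\in T$ has an extension $t^\frown x\in T$; $|t|$ is the length, $t\restriction k$ the initial segment of length $k$. $\mathrm{Run}(T)=\{R\in M^\omega:R\restriction n\in T\ \forall n\}$. A game is $(T,A)$ with $A\subseteq\mathrm{Run}(T)$; finite if $\mathrm{Run}(T)$ is finite. A chronological map $f\colon T_1\to T_2$ satisfies $|f(t)|=|t|$, $f(t\restriction k)=f(t)\restriction k$, inducing $\bar f$ on runs via $\bar f(R)\restriction n=f(R\restriction n)$. $\mathbf{Games}_A$ is the category of games with A-morphisms (chronological $f$ with $\bar f[A_1]\subseteq A_2$); its isomorphisms (automorphisms) are bijective chronological maps $f$ with $\bar f[A_1]=A_2$. A game embedding is an injective chronological $f$ with $\bar f(R)\in A_2\iff R\in A_1$ for all runs $R$. $c_{00}(\omega)$ is the set of eventually zero sequences in $\omega^\omega=\mathrm{Run}(\omega^{<\omega})$. *)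

theory Defs
  imports Main "HOL-Library.Countable_Set"
begin

text \<open>Finite sequences are lists; t restricted to k is take k t. Runs are functions nat => 'm.\<close>

definition game_tree :: "'m list set \<Rightarrow> bool" where
  "game_tree T \<longleftrightarrow>
     (\<forall>t\<in>T. \<forall>k. take k t \<in> T) \<and> (\<forall>t\<in>T. \<exists>x. t @ [x] \<in> T)"

definition run_prefix :: "(nat \<Rightarrow> 'm) \<Rightarrow> nat \<Rightarrow> 'm list" where
  "run_prefix R n = map R [0..<n]"

definition Run :: "'m list set \<Rightarrow> (nat \<Rightarrow> 'm) set" where
  "Run T = {R. \<forall>n. run_prefix R n \<in> T}"

definition is_game :: "'m list set \<times> (nat \<Rightarrow> 'm) set \<Rightarrow> bool" where
  "is_game G \<longleftrightarrow> game_tree (fst G) \<and> snd G \<subseteq> Run (fst G)"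

definition finite_game :: "'m list set \<times> (nat \<Rightarrow> 'm) set \<Rightarrow> bool" where
  "finite_game G \<longleftrightarrow> is_game G \<and> finite (Run (fst G))"

definition chronological :: "('a list \<Rightarrow> 'b list) \<Rightarrow> 'a list set \<Rightarrow> 'b list set \<Rightarrow> bool" where
  "chronological f T1 T2 \<longleftrightarrow>
     (\<forall>t\<in>T1. f t \<in> T2 \<and> length (f t) = length t \<and> (\<forall>k. f (take k t) = take k (f t)))"

text \<open>Induced map on runs: (fbar f R) restricted to n equals f (R restricted to n).\<close>
definition fbar :: "('a list \<Rightarrow> 'b list) \<Rightarrow> (nat \<Rightarrow> 'a) \<Rightarrow> (nat \<Rightarrow> 'b)" where
  "fbar f R = (\<lambda>n. f (run_prefix R (Suc n)) ! n)"

definition game_iso ::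
  "('a list \<Rightarrow> 'b list) \<Rightarrow> 'a list set \<times> (nat \<Rightarrow> 'a) set \<Rightarrow> 'b list set \<times> (nat \<Rightarrow> 'b) set \<Rightarrow> bool" where
  "game_iso f G1 G2 \<longleftrightarrow> chronological f (fst G1) (fst G2) \<and> bij_betw f (fst G1) (fst G2)
      \<and> fbar f ` snd G1 = snd G2"

definition games_isomorphic ::
  "'a list set \<times> (nat \<Rightarrow> 'a) set \<Rightarrow> 'b list set \<times> (nat \<Rightarrow> 'b) set \<Rightarrow> bool" where
  "games_isomorphic G1 G2 \<longleftrightarrow> (\<exists>f. game_iso f G1 G2)"

definition game_embedding ::
  "('a list \<Rightarrow> 'b list) \<Rightarrow> 'a list set \<times> (nat \<Rightarrow> 'a) set \<Rightarrow> 'b list set \<times> (nat \<Rightarrow> 'b) set \<Rightarrow> bool" where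
  "game_embedding f G1 G2 \<longleftrightarrow> chronological f (fst G1) (fst G2) \<and> inj_on f (fst G1)
      \<and> (\<forall>R\<in>Run (fst G1). fbar f R \<in> snd G2 \<longleftrightarrow> R \<in> snd G1)"

definition c00 :: "(nat \<Rightarrow> nat) set" where
  "c00 = {R. \<exists>N. \<forall>n\<ge>N. R n = 0}"

definition G_FL :: "nat list set \<times> (nat \<Rightarrow> nat) set" where
  "G_FL = (UNIV, c00)"

definition countable_game :: "'m list set \<times> (nat \<Rightarrow> 'm) set \<Rightarrow> bool" where
  "countable_game G \<longleftrightarrow> countable (fst G) \<and> countable (snd G)"

text \<open>Property (2), relative to finite games whose moves have type 'c.\<close>
definition fin_universal ::
  "'c itself \<Rightarrow> 'm list set \<times> (nat \<Rightarrow> 'm) set \<Rightarrow> bool" where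
  "fin_universal _ G \<longleftrightarrow>
     (\<forall>C :: 'c list set \<times> (nat \<Rightarrow> 'c) set. finite_game C \<longrightarrow> (\<exists>f. game_embedding f C G))"

text \<open>Property (3), relative to finite games whose moves have type 'c.\<close>
definition fin_ultrahomogeneous ::
  "'c itself \<Rightarrow> 'm list set \<times> (nat \<Rightarrow> 'm) set \<Rightarrow> bool" where
  "fin_ultrahomogeneous _ G \<longleftrightarrow>
     (\<forall>(C :: 'c list set \<times> (nat \<Rightarrow> 'c) set) f g. finite_game C \<longrightarrow>
        game_embedding f C G \<longrightarrow> game_embedding g C G \<longrightarrow>
        (\<exists>u. game_iso u G G \<and> (\<forall>t\<in>fst C. u (f t) = g t)))"

end

theory Submission
  imports Defs
begin

text \<open>
  Enumerate a countable set A of runs as a j. At a node t, the leader move is the next move of the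
  run of least index through t. A run lies in A iff from some point on it always plays the leader
  move: for a j this holds once the finitely many runs of smaller index have split off from it.
  Hence relabelling the leader move by 0 and the other children injectively by positive numbers
  embeds any countable game (T, A) into G_FL, which gives universality. If in addition every node
  has infinitely many children and lies on a run in A, the relabelling is bijective at each node, so
  it is an isomorphism onto G_FL; universality and homogeneity of G force both properties, by
  embedding small finite games whose runs branch off a given run of G.

  For homogeneity of G_FL, two embeddings f, g of a finite game differ at each node of the image of
  f by a finite injection of moves. Extending these to permutations of \<nat> (and the identity off the
  image) gives a relabelling that maps f to g; along a run that leaves the image it eventually fixes
  every move, so it preserves eventually-zero runs.
\<close>

section \<open>Runs and chronological maps\<close>

lemma length_run_prefix [simp]: "length (run_prefix R n) = n"
  by (simp add: run_prefix_def)

lemma nth_run_prefix [simp]: "i < n \<Longrightarrow> run_prefix R n ! i = R i"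
  by (simp add: run_prefix_def)

lemma run_prefix_0 [simp]: "run_prefix R 0 = []"
  by (simp add: run_prefix_def)

lemma run_prefix_Suc: "run_prefix R (Suc n) = run_prefix R n @ [R n]"
  by (simp add: run_prefix_def)

lemma take_run_prefix [simp]: "take k (run_prefix R n) = run_prefix R (min k n)"
  by (simp add: run_prefix_def take_map min_def)

lemma run_prefix_eq_iff: "run_prefix R n = run_prefix S n \<longleftrightarrow> (\<forall>i<n. R i = S i)"
  by (auto simp: run_prefix_def)

lemma run_eqI: "(\<And>n. run_prefix R n = run_prefix S n) \<Longrightarrow> R = S"
  by (metis lessI run_prefix_eq_iff ext)

lemma run_of_chain:
  assumes len: "\<And>n. length (u n) = n" and chain: "\<And>n. take n (u (Suc n)) = u n"
  shows "\<exists>R. \<forall>n. run_prefix R n = u n"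
proof -
  have coherent: "take k (u n) = u k" if "k \<le> n" for k n
    using that
  proof (induction n rule: dec_induct)
    case (step n)
    have "take k (u (Suc n)) = take k (take n (u (Suc n)))" using step.hyps by simp
    then show ?case using chain step.IH by simp
  qed (simp add: len)
  define R where "R i = u (Suc i) ! i" for i
  have "run_prefix R n = u n" for n
  proof (rule nth_equalityI)
    fix i assume "i < length (run_prefix R n)"
    then have "i < n" by simp
    then have "u (Suc i) ! i = take (Suc i) (u n) ! i" using coherent[of "Suc i" n] by simp
    then show "run_prefix R n ! i = u n ! i" using \<open>i < n\<close> by (simp add: R_def)
  qed (simp add: len)
  then show ?thesis by blast
qed

lemma game_tree_take: "game_tree T \<Longrightarrow> t \<in> T \<Longrightarrow> take k t \<in> T"
  by (simp add: game_tree_def)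

lemma game_tree_butlast: "game_tree T \<Longrightarrow> t @ [x] \<in> T \<Longrightarrow> t \<in> T"
  by (metis butlast_conv_take butlast_snoc game_tree_take)

lemma game_tree_Nil: "game_tree T \<Longrightarrow> t \<in> T \<Longrightarrow> [] \<in> T"
  using game_tree_take[of T t 0] by simp

lemma game_tree_run_through:
  assumes T: "game_tree T" and t: "t \<in> T"
  shows "\<exists>R\<in>Run T. run_prefix R (length t) = t"
proof -
  define ext where "ext s = s @ [SOME x. s @ [x] \<in> T]" for s
  have ext: "ext s \<in> T" if "s \<in> T" for s
    using T that someI_ex[of "\<lambda>x. s @ [x] \<in> T"] by (simp add: ext_def game_tree_def)
  define u where "u n = (ext ^^ n) t" for n
  have u_Suc: "u (Suc n) = ext (u n)" for n
    by (simp add: u_def)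
  have u: "u n \<in> T \<and> length (u n) = length t + n \<and> take (length t) (u n) = t" for n
    by (induction n) (simp_all add: u_def t ext, simp add: u_Suc[unfolded u_def] ext_def)
  have "\<exists>R. \<forall>n. run_prefix R n = take n (u n)"
    by (rule run_of_chain) (simp_all add: u u_Suc ext_def)
  then obtain R where R: "\<And>n. run_prefix R n = take n (u n)" by blast
  have "R \<in> Run T" using R u T by (simp add: Run_def game_tree_take)
  moreover have "run_prefix R (length t) = t" using R u by simp
  ultimately show ?thesis by blast
qed

lemma chronologicalD:
  assumes "chronological f T T2" and "t \<in> T"
  shows "f t \<in> T2" and "length (f t) = length t" and "f (take k t) = take k (f t)"
  using assms by (simp_all add: chronological_def)

lemma chronological_subset: "chronological f T T2 \<Longrightarrow> T' \<subseteq> T \<Longrightarrow> chronological f T' T2"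
  by (auto simp: chronological_def)

lemma chronological_comp:
  "chronological f T1 T2 \<Longrightarrow> chronological g T2 T3 \<Longrightarrow> chronological (g \<circ> f) T1 T3"
  by (simp add: chronological_def)

lemma chronological_snoc:
  assumes "chronological f T T2" and "t @ [x] \<in> T"
  shows "f (t @ [x]) = f t @ [last (f (t @ [x]))]"
proof -
  have len: "length (f (t @ [x])) = Suc (length t)" using chronologicalD(2)[OF assms] by simp
  have "f t = take (length t) (f (t @ [x]))"
    using chronologicalD(3)[OF assms, of "length t"] by simp
  also have "\<dots> = butlast (f (t @ [x]))" using len by (simp add: butlast_conv_take)
  finally show ?thesis using len by (metis append_butlast_last_id list.size(3) nat.distinct(1))
qed

lemma run_prefix_fbar:
  assumes f: "chronological f T T2" and R: "R \<in> Run T"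
  shows "run_prefix (fbar f R) n = f (run_prefix R n)"
proof (rule nth_equalityI)
  have RT: "run_prefix R m \<in> T" for m using R by (simp add: Run_def)
  show "length (run_prefix (fbar f R) n) = length (f (run_prefix R n))"
    using chronologicalD(2)[OF f RT] by simp
  fix i assume "i < length (run_prefix (fbar f R) n)"
  then have "i < n" by simp
  then have "f (run_prefix R (Suc i)) = take (Suc i) (f (run_prefix R n))"
    using chronologicalD(3)[OF f RT, of "Suc i" n] by (simp add: min_def)
  then show "run_prefix (fbar f R) n ! i = f (run_prefix R n) ! i"
    using \<open>i < n\<close> by (simp add: fbar_def)
qed

lemma fbar_in_Run: "chronological f T T2 \<Longrightarrow> R \<in> Run T \<Longrightarrow> fbar f R \<in> Run T2"
  by (simp add: Run_def run_prefix_fbar chronologicalD(1))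

lemma fbar_comp:
  assumes "chronological f T1 T2" and "R \<in> Run T1"
  shows "fbar (g \<circ> f) R = fbar g (fbar f R)"
proof
  fix n
  have "fbar g (fbar f R) n = g (run_prefix (fbar f R) (Suc n)) ! n"
    by (simp only: fbar_def)
  also have "\<dots> = fbar (g \<circ> f) R n" by (simp only: run_prefix_fbar[OF assms]) (simp add: fbar_def)
  finally show "fbar (g \<circ> f) R n = fbar g (fbar f R) n" ..
qed

lemma fbar_cong: "R \<in> Run T \<Longrightarrow> (\<And>t. t \<in> T \<Longrightarrow> f t = g t) \<Longrightarrow> fbar f R = fbar g R"
  by (simp add: fbar_def Run_def)

lemma inj_on_fbar:
  assumes f: "chronological f T T2" and inj: "inj_on f T"
  shows "inj_on (fbar f) (Run T)"
proof
  fix R S assume R: "R \<in> Run T" and S: "S \<in> Run T" and eq: "fbar f R = fbar f S"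
  show "R = S"
  proof (rule run_eqI)
    fix n
    have "f (run_prefix R n) = f (run_prefix S n)"
      using eq run_prefix_fbar[OF f R] run_prefix_fbar[OF f S] by metis
    then show "run_prefix R n = run_prefix S n" using inj R S by (auto simp: Run_def inj_on_def)
  qed
qed

lemma fbar_image_Run:
  assumes f: "chronological f T T2" and bij: "bij_betw f T T2" and T: "game_tree T"
  shows "fbar f ` Run T = Run T2"
proof
  show "fbar f ` Run T \<subseteq> Run T2" using fbar_in_Run[OF f] by blast
next
  show "Run T2 \<subseteq> fbar f ` Run T"
  proof
    fix R' assume R': "R' \<in> Run T2"
    define u where "u n = inv_into T f (run_prefix R' n)" for n
    have u: "u n \<in> T" "f (u n) = run_prefix R' n" for n
      using R' bij unfolding u_def bij_betw_def Run_def by (auto intro: inv_into_into f_inv_into_f)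
    have "length (u n) = n" for n using chronologicalD(2)[OF f u(1)] u(2) by simp
    moreover have "take n (u (Suc n)) = u n" for n
    proof -
      have "f (take n (u (Suc n))) = f (u n)"
        using chronologicalD(3)[OF f u(1)] u(2) by (simp add: min_def)
      moreover have "take n (u (Suc n)) \<in> T" using game_tree_take[OF T u(1)] .
      ultimately show ?thesis using bij u(1) by (simp add: bij_betw_def inj_on_def)
    qed
    ultimately obtain R where R: "\<And>n. run_prefix R n = u n" using run_of_chain by metis
    then have "R \<in> Run T" using u(1) by (simp add: Run_def)
    moreover have "fbar f R = R'" by (rule run_eqI) (simp add: run_prefix_fbar[OF f \<open>R \<in> Run T\<close>] R u(2))
    ultimately show "R' \<in> fbar f ` Run T" by blast
  qed
qed

lemma game_embedding_comp:
  assumes f: "game_embedding f G1 G2" and g: "game_embedding g G2 G3"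
  shows "game_embedding (g \<circ> f) G1 G3"
  unfolding game_embedding_def
proof (intro conjI ballI)
  have cf: "chronological f (fst G1) (fst G2)" and cg: "chronological g (fst G2) (fst G3)"
    using f g by (simp_all add: game_embedding_def)
  show "chronological (g \<circ> f) (fst G1) (fst G3)" by (rule chronological_comp[OF cf cg])
  show "inj_on (g \<circ> f) (fst G1)"
    using f g chronologicalD(1)[OF cf]
    by (auto simp: game_embedding_def intro: comp_inj_on inj_on_subset)
  fix R assume R: "R \<in> Run (fst G1)"
  show "fbar (g \<circ> f) R \<in> snd G3 \<longleftrightarrow> R \<in> snd G1"
    using f g fbar_in_Run[OF cf R] R by (simp add: fbar_comp[OF cf R] game_embedding_def)
qed

lemma game_iso_imp_embedding:
  assumes u: "game_iso u G1 G2" and A1: "snd G1 \<subseteq> Run (fst G1)"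
  shows "game_embedding u G1 G2"
  unfolding game_embedding_def
proof (intro conjI ballI)
  show cu: "chronological u (fst G1) (fst G2)" and iu: "inj_on u (fst G1)"
    using u by (simp_all add: game_iso_def bij_betw_def)
  fix R assume R: "R \<in> Run (fst G1)"
  have "R \<in> snd G1" if "fbar u R \<in> snd G2"
  proof -
    have "fbar u R \<in> fbar u ` snd G1" using u that by (simp add: game_iso_def)
    then obtain S where "S \<in> snd G1" "fbar u S = fbar u R" by (metis imageE)
    then show ?thesis using A1 inj_on_fbar[OF cu iu] R by (metis inj_on_contraD subsetD)
  qed
  then show "fbar u R \<in> snd G2 \<longleftrightarrow> R \<in> snd G1" using u by (auto simp: game_iso_def)
qed

lemma game_iso_if_bij_embedding:
  assumes f: "game_embedding f G1 G2" and bij: "bij_betw f (fst G1) (fst G2)"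
    and G1: "is_game G1" and G2: "is_game G2"
  shows "game_iso f G1 G2"
proof -
  have cf: "chronological f (fst G1) (fst G2)" using f by (simp add: game_embedding_def)
  have runs: "fbar f ` Run (fst G1) = Run (fst G2)"
    using fbar_image_Run[OF cf bij] G1 by (simp add: is_game_def)
  have "fbar f ` snd G1 = snd G2"
  proof
    show "fbar f ` snd G1 \<subseteq> snd G2" using f G1 by (auto simp: game_embedding_def is_game_def)
    show "snd G2 \<subseteq> fbar f ` snd G1"
      using f G2 runs by (force simp: game_embedding_def is_game_def)
  qed
  then show ?thesis using cf bij by (simp add: game_iso_def)
qed

section \<open>Children and trees of finitely many runs\<close>

definition children :: "'m list set \<Rightarrow> 'm list \<Rightarrow> 'm set" where
  "children T t = {x. t @ [x] \<in> T}"

lemma children_subset_moves: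
  assumes "game_tree T"
  shows "children T t \<subseteq> (\<lambda>R. R (length t)) ` Run T"
proof
  fix x assume "x \<in> children T t"
  then obtain R where "R \<in> Run T" "run_prefix R (Suc (length t)) = t @ [x]"
    using game_tree_run_through[OF assms] by (fastforce simp: children_def)
  then show "x \<in> (\<lambda>R. R (length t)) ` Run T" by (metis run_prefix_Suc snoc_eq_iff_butlast image_eqI)
qed

lemma finite_children: "game_tree T \<Longrightarrow> finite (Run T) \<Longrightarrow> finite (children T t)"
  by (rule finite_subset[OF children_subset_moves]) simp_all

lemma countable_children: "countable T \<Longrightarrow> countable (children T t)"
proof -
  assume "countable T"
  moreover have "children T t \<subseteq> (\<lambda>s. s ! length t) ` T" by (force simp: children_def)
  ultimately show ?thesis by (meson countable_image countable_subset)
qed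

lemma countable_game_tree:
  assumes T: "game_tree T" and runs: "countable (Run T)"
  shows "countable T"
proof (rule countable_subset)
  show "T \<subseteq> (\<Union>R\<in>Run T. range (run_prefix R))"
    using game_tree_run_through[OF T] by (metis (no_types, lifting) UN_iff rangeI subsetI)
  show "countable (\<Union>R\<in>Run T. range (run_prefix R))" using runs by simp
qed

definition tree_of_runs :: "(nat \<Rightarrow> 'm) set \<Rightarrow> 'm list set" where
  "tree_of_runs S = {run_prefix R n | R n. R \<in> S}"

lemma tree_of_runs_mono: "S' \<subseteq> S \<Longrightarrow> tree_of_runs S' \<subseteq> tree_of_runs S"
  by (auto simp: tree_of_runs_def)

lemma game_tree_tree_of_runs: "game_tree (tree_of_runs S)"
  unfolding game_tree_def
proof (intro conjI ballI allI)
  fix t k assume "t \<in> tree_of_runs S"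
  then show "take k t \<in> tree_of_runs S" by (auto simp: tree_of_runs_def) blast
next
  fix t assume "t \<in> tree_of_runs S"
  then obtain R n where "R \<in> S" "t = run_prefix R n" by (auto simp: tree_of_runs_def)
  then have "t @ [R n] \<in> tree_of_runs S" by (auto simp: tree_of_runs_def run_prefix_Suc[symmetric])
  then show "\<exists>x. t @ [x] \<in> tree_of_runs S" by blast
qed

text \<open>A run of the tree passes through infinitely many prefixes of a single run of the finite set.\<close>
lemma Run_tree_of_runs:
  assumes fin: "finite S"
  shows "Run (tree_of_runs S) = S"
proof
  show "S \<subseteq> Run (tree_of_runs S)" by (auto simp: Run_def tree_of_runs_def)
next
  show "Run (tree_of_runs S) \<subseteq> S"
  proof
    fix R assume "R \<in> Run (tree_of_runs S)"
    then have "\<forall>n. \<exists>Q\<in>S. run_prefix R n = run_prefix Q n"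
      by (auto simp: Run_def tree_of_runs_def) (metis length_run_prefix)
    then obtain q where q: "\<And>n. q n \<in> S" "\<And>n. run_prefix R n = run_prefix (q n) n" by metis
    have "finite (range q)" using fin q(1) by (meson finite_subset image_subsetI)
    then obtain Q where Q: "infinite {n. q n = Q}"
      using inf_img_fin_dom[of q UNIV] by (auto simp: vimage_def)
    have "R = Q"
    proof
      fix i
      obtain n where "q n = Q" "Suc i \<le> n" using Q by (meson infinite_nat_iff_unbounded_le mem_Collect_eq)
      then show "R i = Q i" using q(2)[of n] by (auto simp: run_prefix_eq_iff)
    qed
    moreover have "{n. q n = Q} \<noteq> {}" using Q by (metis finite.emptyI)
    ultimately show "R \<in> S" using q(1) by auto
  qed
qed

lemma finite_game_tree_of_runs: "finite S \<Longrightarrow> B \<subseteq> S \<Longrightarrow> finite_game (tree_of_runs S, B)"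
  by (simp add: finite_game_def is_game_def Run_tree_of_runs game_tree_tree_of_runs)

section \<open>Relabelling moves and leader moves\<close>

definition relabel :: "('a list \<Rightarrow> 'a \<Rightarrow> 'b) \<Rightarrow> 'a list \<Rightarrow> 'b list" where
  "relabel \<phi> t = map (\<lambda>i. \<phi> (take i t) (t ! i)) [0..<length t]"

lemma length_relabel [simp]: "length (relabel \<phi> t) = length t"
  by (simp add: relabel_def)

lemma relabel_Nil [simp]: "relabel \<phi> [] = []"
  by (simp add: relabel_def)

lemma relabel_snoc [simp]: "relabel \<phi> (t @ [x]) = relabel \<phi> t @ [\<phi> t x]"
  by (rule nth_equalityI) (auto simp: relabel_def nth_append less_Suc_eq)

lemma relabel_take: "relabel \<phi> (take k t) = take k (relabel \<phi> t)"
proof (rule nth_equalityI)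
  fix i assume "i < length (relabel \<phi> (take k t))"
  then have "i < k" "i < length t" by auto
  then show "relabel \<phi> (take k t) ! i = take k (relabel \<phi> t) ! i"
    by (simp add: relabel_def min_def)
qed simp

lemma chronological_relabel: "chronological (relabel \<phi>) T UNIV"
  by (simp add: chronological_def relabel_take)

lemma fbar_relabel: "fbar (relabel \<phi>) R n = \<phi> (run_prefix R n) (R n)"
  by (simp add: fbar_def run_prefix_Suc nth_append)

lemma inj_on_relabel:
  assumes T: "game_tree T" and inj: "\<And>t. t \<in> T \<Longrightarrow> inj_on (\<phi> t) (children T t)"
  shows "inj_on (relabel \<phi>) T"
proof -
  have "s = t" if "s \<in> T" "t \<in> T" "length s = n" "length t = n" "relabel \<phi> s = relabel \<phi> t" for n s t
    using that
  proof (induction n arbitrary: s t)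
    case (Suc n)
    obtain s' x t' y where st: "s = s' @ [x]" "t = t' @ [y]"
      using Suc.prems(3,4) by (metis length_Suc_conv_rev)
    then have "s' \<in> T" "t' \<in> T" using Suc.prems(1,2) game_tree_butlast[OF T] by auto
    moreover have "relabel \<phi> s' = relabel \<phi> t'" "\<phi> s' x = \<phi> t' y" using Suc.prems(5) st by auto
    ultimately have "s' = t'" and "\<phi> s' x = \<phi> s' y" using Suc.IH Suc.prems(3,4) st by auto
    moreover have "x \<in> children T s'" "y \<in> children T s'"
      using Suc.prems(1,2) st \<open>s' = t'\<close> by (auto simp: children_def)
    ultimately show ?case using inj[OF \<open>s' \<in> T\<close>] st by (auto dest: inj_onD)
  qed simp
  then show ?thesis by (metis inj_onI length_relabel)
qed

lemma relabel_surj: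
  assumes "[] \<in> T" and surj: "\<And>t y. t \<in> T \<Longrightarrow> \<exists>x\<in>children T t. \<phi> t x = y"
  shows "\<exists>t\<in>T. relabel \<phi> t = ys"
proof (induction ys rule: rev_induct)
  case Nil then show ?case using assms(1) by force
next
  case (snoc y ys)
  then obtain t where "t \<in> T" "relabel \<phi> t = ys" by blast
  moreover obtain x where "t @ [x] \<in> T" "\<phi> t x = y" using surj[OF \<open>t \<in> T\<close>] by (auto simp: children_def)
  ultimately show ?case by (metis relabel_snoc)
qed

lemma relabel_eq_chronological:
  assumes T: "game_tree T" and f: "chronological f T T2"
    and \<phi>: "\<And>t x. t @ [x] \<in> T \<Longrightarrow> \<phi> t x = last (f (t @ [x]))"
    and t: "t \<in> T"
  shows "relabel \<phi> t = f t"
  using t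
proof (induction t rule: rev_induct)
  case Nil
  then show ?case using chronologicalD(2)[OF f Nil] by simp
next
  case (snoc x t)
  then show ?case using chronological_snoc[OF f] \<phi> game_tree_butlast[OF T] by simp
qed

definition extenders :: "(nat \<Rightarrow> nat \<Rightarrow> 'm) \<Rightarrow> nat set \<Rightarrow> 'm list \<Rightarrow> nat set" where
  "extenders a J t = {j\<in>J. run_prefix (a j) (length t) = t}"

definition leader_move :: "(nat \<Rightarrow> nat \<Rightarrow> 'm) \<Rightarrow> nat set \<Rightarrow> 'm list \<Rightarrow> 'm \<Rightarrow> bool" where
  "leader_move a J t x \<longleftrightarrow> extenders a J t \<noteq> {} \<and> x = a (LEAST j. j \<in> extenders a J t) (length t)"

lemma leader_move_unique: "leader_move a J t x \<Longrightarrow> leader_move a J t y \<Longrightarrow> x = y"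
  by (simp add: leader_move_def)

lemma leader_move_exists:
  assumes runs: "a ` J \<subseteq> Run T" and j: "j \<in> extenders a J t"
  shows "\<exists>x\<in>children T t. leader_move a J t x"
proof -
  define L where "L = (LEAST j. j \<in> extenders a J t)"
  have L: "L \<in> J" "run_prefix (a L) (length t) = t"
    using LeastI[of "\<lambda>j. j \<in> extenders a J t", OF j] by (simp_all add: L_def extenders_def)
  then have "t @ [a L (length t)] \<in> T" using runs by (metis Run_def image_subset_iff mem_Collect_eq run_prefix_Suc)
  then show ?thesis using j by (auto simp: children_def leader_move_def L_def)
qed

text \<open>Once the finitely many runs of smaller index have split off from a k, a k is the leader.\<close>
lemma eventually_leader_move:
  assumes "k \<in> J"
  shows "\<exists>N. \<forall>n\<ge>N. leader_move a J (run_prefix (a k) n) (a k n)"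
proof -
  have "\<forall>j. \<exists>i. a j \<noteq> a k \<longrightarrow> a j i \<noteq> a k i" by (auto simp: fun_eq_iff)
  then obtain d where d: "\<And>j. a j \<noteq> a k \<Longrightarrow> a j (d j) \<noteq> a k (d j)" by metis
  define N where "N = Suc (Max (d ` {..k}))"
  have "leader_move a J (run_prefix (a k) n) (a k n)" if "n \<ge> N" for n
  proof -
    let ?E = "extenders a J (run_prefix (a k) n)"
    define L where "L = (LEAST j. j \<in> ?E)"
    have k: "k \<in> ?E" using assms by (simp add: extenders_def)
    then have "L \<in> ?E" "L \<le> k" unfolding L_def by (auto intro: LeastI Least_le)
    moreover have "d L \<le> Max (d ` {..k})" using \<open>L \<le> k\<close> by simp
    then have "d L < n" using that by (simp add: N_def)
    ultimately have "a L = a k" using d by (force simp: extenders_def run_prefix_eq_iff)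
    then show ?thesis using k by (auto simp: leader_move_def L_def)
  qed
  then show ?thesis by blast
qed

lemma eventually_leader_move_imp:
  assumes lead: "\<And>n. n \<ge> N \<Longrightarrow> leader_move a J (run_prefix R n) (R n)"
  shows "R \<in> a ` J"
proof -
  define j where "j = (LEAST j. j \<in> extenders a J (run_prefix R N))"
  have "j \<in> extenders a J (run_prefix R N)"
    using lead[of N] unfolding j_def leader_move_def by (metis LeastI ex_in_conv order_refl)
  then have jJ: "j \<in> J" by (simp add: extenders_def)
  have inv: "run_prefix (a j) n = run_prefix R n \<and> (LEAST j. j \<in> extenders a J (run_prefix R n)) = j"
    if "n \<ge> N" for n
    using that
  proof (induction n rule: dec_induct)
    case base
    then show ?case using \<open>j \<in> extenders a J (run_prefix R N)\<close> by (simp add: extenders_def j_def)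
  next
    case (step n)
    then have "R n = a j n" using lead[of n] by (simp add: leader_move_def)
    then have pre: "run_prefix (a j) (Suc n) = run_prefix R (Suc n)"
      using step.IH by (simp add: run_prefix_Suc)
    have "(LEAST j. j \<in> extenders a J (run_prefix R (Suc n))) = j"
    proof (rule Least_equality)
      show "j \<in> extenders a J (run_prefix R (Suc n))" using pre jJ by (simp add: extenders_def)
      fix i assume "i \<in> extenders a J (run_prefix R (Suc n))"
      then have "i \<in> extenders a J (run_prefix R n)" by (auto simp: extenders_def run_prefix_eq_iff)
      then show "j \<le> i" using step.IH by (metis Least_le)
    qed
    then show ?case using pre by simp
  qed
  have "R = a j"
  proof
    fix i
    have "run_prefix (a j) (Suc i + N) = run_prefix R (Suc i + N)" using inv by simp
    then show "R i = a j i" by (simp add: run_prefix_eq_iff)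
  qed
  then show ?thesis using jJ by blast
qed

lemma eventually_leader_move_iff:
  "(\<exists>N. \<forall>n\<ge>N. leader_move a J (run_prefix R n) (R n)) \<longleftrightarrow> R \<in> a ` J"
  using eventually_leader_move eventually_leader_move_imp by blast

definition leader_code :: "(nat \<Rightarrow> nat \<Rightarrow> 'm) \<Rightarrow> nat set \<Rightarrow> 'm set \<Rightarrow> 'm list \<Rightarrow> 'm \<Rightarrow> nat" where
  "leader_code a J D t x =
     (if leader_move a J t x then 0 else Suc (to_nat_on {y\<in>D. \<not> leader_move a J t y} x))"

lemma inj_on_leader_code:
  assumes "countable D"
  shows "inj_on (leader_code a J D t) D"
proof
  fix x y assume "x \<in> D" "y \<in> D" and eq: "leader_code a J D t x = leader_code a J D t y"
  let ?E = "{y\<in>D. \<not> leader_move a J t y}"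
  show "x = y"
  proof (cases "leader_move a J t x")
    case True
    then show ?thesis using eq leader_move_unique by (fastforce simp: leader_code_def split: if_splits)
  next
    case False
    then have "\<not> leader_move a J t y" "to_nat_on ?E x = to_nat_on ?E y"
      using eq by (simp_all add: leader_code_def split: if_splits)
    moreover have "countable ?E" using assms by simp
    ultimately show ?thesis using \<open>x \<in> D\<close> \<open>y \<in> D\<close> False by (auto dest: inj_onD[OF inj_on_to_nat_on])
  qed
qed

lemma leader_code_surj:
  assumes "countable D" "infinite D" "x0 \<in> D" "leader_move a J t x0"
  shows "\<exists>x\<in>D. leader_code a J D t x = n"
proof (cases n)
  case 0
  then show ?thesis using assms by (auto simp: leader_code_def)
next
  case (Suc m)
  let ?E = "{y\<in>D. \<not> leader_move a J t y}"
  have "leader_move a J t y \<longleftrightarrow> y = x0" for y using assms(4) leader_move_unique by metis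
  then have "?E = D - {x0}" by auto
  then have E: "countable ?E" "infinite ?E" using assms(1,2) by simp_all
  define x where "x = from_nat_into ?E m"
  have "?E \<noteq> {}" using E(2) by (metis finite.emptyI)
  then have "x \<in> ?E" unfolding x_def by (rule from_nat_into)
  moreover have "to_nat_on ?E x = m" unfolding x_def using E by simp
  ultimately show ?thesis using Suc by (auto simp: leader_code_def)
qed

definition leader_relabel :: "(nat \<Rightarrow> nat \<Rightarrow> 'm) \<Rightarrow> nat set \<Rightarrow> 'm list set \<Rightarrow> 'm list \<Rightarrow> nat list" where
  "leader_relabel a J T = relabel (\<lambda>t. leader_code a J (children T t) t)"

lemma leader_relabel_embedding:
  assumes T: "game_tree T" "countable T"
  shows "game_embedding (leader_relabel a J T) (T, a ` J) G_FL"
  unfolding game_embedding_def G_FL_def fst_conv snd_conv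
proof (intro conjI ballI)
  show "chronological (leader_relabel a J T) T UNIV"
    by (simp add: leader_relabel_def chronological_relabel)
  show "inj_on (leader_relabel a J T) T"
    unfolding leader_relabel_def
    by (rule inj_on_relabel[OF T(1)]) (simp add: inj_on_leader_code countable_children T(2))
  fix R
  have "fbar (leader_relabel a J T) R n = 0 \<longleftrightarrow> leader_move a J (run_prefix R n) (R n)" for n
    by (simp add: leader_relabel_def fbar_relabel leader_code_def)
  then show "fbar (leader_relabel a J T) R \<in> c00 \<longleftrightarrow> R \<in> a ` J"
    by (simp add: c00_def eventually_leader_move_iff[symmetric])
qed

lemma bij_leader_relabel:
  assumes T: "game_tree T" "countable T" "[] \<in> T" and runs: "a ` J \<subseteq> Run T"
    and branching: "\<And>t. t \<in> T \<Longrightarrow> infinite (children T t)"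
    and dense: "\<And>t. t \<in> T \<Longrightarrow> extenders a J t \<noteq> {}"
  shows "bij_betw (leader_relabel a J T) T UNIV"
proof -
  have "\<exists>t\<in>T. leader_relabel a J T t = ys" for ys
    unfolding leader_relabel_def
  proof (rule relabel_surj[OF T(3)])
    fix t n assume "t \<in> T"
    obtain j where "j \<in> extenders a J t" using dense[OF \<open>t \<in> T\<close>] by blast
    then obtain x0 where "x0 \<in> children T t" "leader_move a J t x0"
      using leader_move_exists[OF runs] by blast
    then show "\<exists>x\<in>children T t. leader_code a J (children T t) t x = n"
      by (rule leader_code_surj[OF countable_children[OF T(2)] branching[OF \<open>t \<in> T\<close>]])
  qed
  moreover have "inj_on (leader_relabel a J T) T"
    using leader_relabel_embedding[OF T(1,2)] by (simp add: game_embedding_def)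
  ultimately show ?thesis unfolding bij_betw_def by (metis UNIV_eq_I imageI)
qed

section \<open>Universality and homogeneity of G_FL\<close>

lemma countable_enumeration:
  fixes A :: "'a set"
  assumes "countable A"
  obtains a :: "nat \<Rightarrow> 'a" and J where "a ` J = A"
proof -
  obtain c :: "'a \<Rightarrow> nat" where "inj_on c A" using assms by (auto simp: countable_def)
  then have "inv_into A c ` c ` A = A" by simp
  then show ?thesis by (rule that)
qed

lemma is_game_G_FL: "is_game G_FL"
  by (simp add: is_game_def G_FL_def game_tree_def Run_def)

lemma countable_c00: "countable c00"
proof (rule countable_subset)
  show "c00 \<subseteq> range (\<lambda>xs n. if n < length xs then xs ! n else 0)"
  proof
    fix R assume "R \<in> c00"
    then obtain N where N: "\<forall>n\<ge>N. R n = 0" by (auto simp: c00_def)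
    then have "R = (\<lambda>n. if n < length (run_prefix R N) then run_prefix R N ! n else 0)"
      by (auto simp: fun_eq_iff)
    then show "R \<in> range (\<lambda>xs n. if n < length xs then xs ! n else 0)" by blast
  qed
qed simp

lemma countable_game_G_FL: "countable_game G_FL"
  by (simp add: countable_game_def G_FL_def countable_c00)

lemma G_FL_universal: "fin_universal TYPE('c) G_FL"
  unfolding fin_universal_def
proof (intro allI impI)
  fix C :: "'c list set \<times> (nat \<Rightarrow> 'c) set"
  assume C: "finite_game C"
  then have T: "game_tree (fst C)" and runs: "finite (Run (fst C))" and A: "snd C \<subseteq> Run (fst C)"
    by (simp_all add: finite_game_def is_game_def)
  then have "countable (snd C)" by (meson countable_finite finite_subset)
  then obtain a :: "nat \<Rightarrow> nat \<Rightarrow> 'c" and J where enum: "a ` J = snd C" by (rule countable_enumeration)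
  have "countable (fst C)" using countable_game_tree[OF T] runs by (simp add: countable_finite)
  then have "game_embedding (leader_relabel a J (fst C)) C G_FL"
    using leader_relabel_embedding[OF T] enum by (metis prod.collapse)
  then show "\<exists>f. game_embedding f C G_FL" by blast
qed

lemma game_tree_image:
  assumes T: "game_tree T" and f: "chronological f T T2"
  shows "game_tree (f ` T)"
  unfolding game_tree_def
proof (intro conjI ballI allI)
  fix t k assume "t \<in> f ` T"
  then obtain s where "s \<in> T" "t = f s" by blast
  then show "take k t \<in> f ` T" using chronologicalD(3)[OF f] game_tree_take[OF T] by (metis imageI)
next
  fix t assume "t \<in> f ` T"
  then obtain s where s: "s \<in> T" "t = f s" by blast
  then obtain x where "s @ [x] \<in> T" using T by (auto simp: game_tree_def)
  then have "t @ [last (f (s @ [x]))] \<in> f ` T" using chronological_snoc[OF f] s by (metis imageI)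
  then show "\<exists>y. t @ [y] \<in> f ` T" by blast
qed

lemma chronological_comp_inv_into:
  assumes T: "game_tree T" and f: "chronological f T T2" "inj_on f T" and g: "chronological g T T3"
  shows "chronological (g \<circ> inv_into T f) (f ` T) T3"
  unfolding chronological_def
proof (intro ballI conjI allI)
  fix t assume "t \<in> f ` T"
  then obtain s where s: "s \<in> T" "t = f s" by blast
  then show "(g \<circ> inv_into T f) t \<in> T3" "length ((g \<circ> inv_into T f) t) = length t"
    using f g by (simp_all add: chronologicalD)
  fix k
  have "(g \<circ> inv_into T f) (take k t) = (g \<circ> inv_into T f) (f (take k s))"
    using chronologicalD(3)[OF f(1) s(1)] s by simp
  also have "\<dots> = take k (g s)" using f(2) g s(1) game_tree_take[OF T] by (simp add: chronologicalD)
  finally show "(g \<circ> inv_into T f) (take k t) = take k ((g \<circ> inv_into T f) t)" using f(2) s by simp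
qed

lemma inj_on_last_move:
  assumes k: "chronological k F T2" "inj_on k F"
  shows "inj_on (\<lambda>y. last (k (t @ [y]))) (children F t)"
proof
  fix x y assume "x \<in> children F t" "y \<in> children F t" and eq: "last (k (t @ [x])) = last (k (t @ [y]))"
  then have "t @ [x] \<in> F" "t @ [y] \<in> F" by (simp_all add: children_def)
  then have "k (t @ [x]) = k (t @ [y])" using chronological_snoc[OF k(1)] eq by metis
  then show "x = y" using k(2) \<open>t @ [x] \<in> F\<close> \<open>t @ [y] \<in> F\<close> by (auto dest: inj_onD)
qed

lemma finite_inj_on_extends_to_bij:
  fixes p :: "'a::countable \<Rightarrow> 'a"
  assumes inf: "infinite (UNIV :: 'a set)" and fin: "finite D" and inj: "inj_on p D"
  shows "\<exists>\<sigma>. bij \<sigma> \<and> (\<forall>y\<in>D. \<sigma> y = p y)"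
proof -
  have E: "infinite (- D)" "infinite (- p ` D)"
    using inf fin by (simp_all add: Compl_eq_Diff_UNIV Diff_infinite_finite)
  define b where "b = from_nat_into (- p ` D) \<circ> to_nat_on (- D)"
  have b: "bij_betw b (- D) (- p ` D)"
    unfolding b_def by (rule bij_betw_trans[OF to_nat_on_infinite bij_betw_from_nat_into]) (simp_all add: E)
  define \<sigma> where "\<sigma> x = (if x \<in> D then p x else b x)" for x
  have "bij_betw \<sigma> D (p ` D)" using inj by (simp add: \<sigma>_def bij_betw_def inj_on_def)
  moreover have "bij_betw \<sigma> (- D) (- p ` D)"
    using b by (rule bij_betw_cong[THEN iffD1, rotated]) (simp add: \<sigma>_def)
  ultimately have "bij_betw \<sigma> (D \<union> - D) (p ` D \<union> - p ` D)" by (rule bij_betw_combine) simp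
  then have "bij \<sigma>" by simp
  then show ?thesis by (auto simp: \<sigma>_def)
qed

text \<open>At each node of F the finite injection of children prescribed by k extends to a permutation of the moves.\<close>
lemma chronological_extends_to_relabel_bij:
  fixes k :: "nat list \<Rightarrow> nat list"
  assumes F: "game_tree F" "finite (Run F)" and k: "chronological k F T2" "inj_on k F"
  shows "\<exists>\<sigma>. (\<forall>t. bij (\<sigma> t)) \<and> (\<forall>t\<in>F. relabel \<sigma> t = k t)
           \<and> (\<forall>t. t \<notin> F \<longrightarrow> \<sigma> t = id)"
proof -
  have "\<forall>t\<in>F. \<exists>\<pi>. bij \<pi> \<and> (\<forall>y\<in>children F t. \<pi> y = last (k (t @ [y])))"
    using finite_inj_on_extends_to_bij[OF infinite_UNIV_nat] finite_children[OF F] inj_on_last_move[OF k]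
    by blast
  then obtain \<pi> where \<pi>: "\<And>t. t \<in> F \<Longrightarrow> bij (\<pi> t)"
    "\<And>t y. t \<in> F \<Longrightarrow> y \<in> children F t \<Longrightarrow> \<pi> t y = last (k (t @ [y]))"
    by metis
  define \<sigma> where "\<sigma> t = (if t \<in> F then \<pi> t else id)" for t
  have "relabel \<sigma> t = k t" if "t \<in> F" for t
  proof (rule relabel_eq_chronological[OF F(1) k(1) _ that])
    fix s x assume "s @ [x] \<in> F"
    then show "\<sigma> s x = last (k (s @ [x]))"
      using \<pi>(2) game_tree_butlast[OF F(1)] by (simp add: \<sigma>_def children_def)
  qed
  moreover have "bij (\<sigma> t)" for t using \<pi>(1) by (simp add: \<sigma>_def)
  moreover have "\<sigma> t = id" if "t \<notin> F" for t using that by (simp add: \<sigma>_def)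
  ultimately show ?thesis by blast
qed

lemma c00_eventually_eq_iff:
  assumes "\<And>n. n \<ge> N \<Longrightarrow> R' n = R n"
  shows "R' \<in> c00 \<longleftrightarrow> R \<in> c00"
proof
  assume "R' \<in> c00"
  then obtain M where "\<forall>n\<ge>M. R' n = 0" by (auto simp: c00_def)
  then have "\<forall>n\<ge>max N M. R n = 0" using assms by force
  then show "R \<in> c00" unfolding c00_def by blast
next
  assume "R \<in> c00"
  then obtain M where "\<forall>n\<ge>M. R n = 0" by (auto simp: c00_def)
  then have "\<forall>n\<ge>max N M. R' n = 0" using assms by force
  then show "R' \<in> c00" unfolding c00_def by blast
qed

lemma bij_relabel:
  assumes "\<And>t. bij (\<sigma> t)"
  shows "bij (relabel \<sigma>)"
proof -
  have T: "game_tree (UNIV :: 'a list set)" by (simp add: game_tree_def)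
  have "inj (relabel \<sigma>)" using assms by (intro inj_on_relabel[OF T]) (meson bij_is_inj inj_on_subset subset_UNIV)
  moreover have "\<exists>t\<in>UNIV. relabel \<sigma> t = ys" for ys
    by (rule relabel_surj) (use assms in \<open>auto simp: children_def, metis bij_pointE\<close>)
  ultimately show ?thesis by (metis bij_def surj_def UNIV_I)
qed

lemma relabel_preserves_c00:
  assumes T: "game_tree T"
    and f: "game_embedding f (T, A) G_FL" and g: "game_embedding g (T, A) G_FL"
    and off: "\<And>t. t \<notin> f ` T \<Longrightarrow> \<sigma> t = id"
    and on: "\<And>s. s \<in> T \<Longrightarrow> relabel \<sigma> (f s) = g s"
  shows "fbar (relabel \<sigma>) R \<in> c00 \<longleftrightarrow> R \<in> c00"
proof (cases "R \<in> Run (f ` T)")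
  case True
  have cf: "chronological f T UNIV" and cg: "chronological g T UNIV" and "inj_on f T"
    using f g by (simp_all add: game_embedding_def G_FL_def)
  then have "chronological f T (f ` T)" "bij_betw f T (f ` T)"
    by (auto simp: chronological_def bij_betw_def)
  then obtain Q where Q: "Q \<in> Run T" "R = fbar f Q" using fbar_image_Run[OF _ _ T] True by blast
  have "fbar (relabel \<sigma>) R = fbar (relabel \<sigma> \<circ> f) Q" by (simp only: fbar_comp[OF cf Q(1)] Q(2))
  also have "\<dots> = fbar g Q" using Q(1) on by (auto intro: fbar_cong)
  finally show ?thesis using f g Q by (simp add: game_embedding_def G_FL_def)
next
  case False
  then obtain N where N: "run_prefix R N \<notin> f ` T" by (auto simp: Run_def)
  have "run_prefix R n \<notin> f ` T" if "n \<ge> N" for n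
    using game_tree_take[OF game_tree_image[OF T], of f UNIV "run_prefix R n" N] N that f
    by (auto simp: game_embedding_def G_FL_def min_def)
  then have "fbar (relabel \<sigma>) R n = R n" if "n \<ge> N" for n using that off by (simp add: fbar_relabel)
  then show ?thesis by (rule c00_eventually_eq_iff)
qed

lemma G_FL_ultrahomogeneous: "fin_ultrahomogeneous TYPE('c) G_FL"
  unfolding fin_ultrahomogeneous_def
proof (intro allI impI)
  fix C :: "'c list set \<times> (nat \<Rightarrow> 'c) set" and f g
  assume C: "finite_game C" and f: "game_embedding f C G_FL" and g: "game_embedding g C G_FL"
  obtain T A where TA: "C = (T, A)" by fastforce
  have T: "game_tree T" "finite (Run T)" using C TA by (simp_all add: finite_game_def is_game_def)
  have cf: "chronological f T UNIV" "inj_on f T" and cg: "chronological g T UNIV" "inj_on g T"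
    using f g TA by (simp_all add: game_embedding_def G_FL_def)
  define k where "k = g \<circ> inv_into T f"
  have k: "chronological k (f ` T) UNIV"
    unfolding k_def by (rule chronological_comp_inv_into[OF T(1) cf cg(1)])
  have k_inj: "inj_on k (f ` T)"
    unfolding k_def by (rule comp_inj_on[OF inj_on_inv_into[OF subset_refl]]) (simp add: cf(2) cg(2))
  have "fbar f ` Run T = Run (f ` T)"
    using cf by (intro fbar_image_Run[OF _ _ T(1)]) (auto simp: chronological_def bij_betw_def)
  then have F: "game_tree (f ` T)" "finite (Run (f ` T))"
    using game_tree_image[OF T(1) cf(1)] T(2) by (metis finite_imageI)+
  obtain \<sigma> where \<sigma>: "\<And>t. bij (\<sigma> t)" "\<And>t. t \<in> f ` T \<Longrightarrow> relabel \<sigma> t = k t"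
    "\<And>t. t \<notin> f ` T \<Longrightarrow> \<sigma> t = id"
    using chronological_extends_to_relabel_bij[OF F k k_inj] by blast
  have on: "relabel \<sigma> (f s) = g s" if "s \<in> T" for s using \<sigma>(2) that cf(2) by (simp add: k_def)
  have bij: "bij (relabel \<sigma>)" using bij_relabel \<sigma>(1) by blast
  have "game_embedding (relabel \<sigma>) G_FL G_FL"
    using relabel_preserves_c00[OF T(1) f[unfolded TA] g[unfolded TA] \<sigma>(3) on] bij
    by (simp add: game_embedding_def G_FL_def chronological_relabel bij_is_inj)
  then have "game_iso (relabel \<sigma>) G_FL G_FL"
    using game_iso_if_bij_embedding is_game_G_FL bij by (metis G_FL_def fst_conv)
  then show "\<exists>u. game_iso u G_FL G_FL \<and> (\<forall>t\<in>fst C. u (f t) = g t)" using on TA by auto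
qed

section \<open>Games with the three properties\<close>

lemma game_embedding_restrict:
  assumes e: "game_embedding e (tree_of_runs S, B) G" and S: "finite S" "S' \<subseteq> S"
  shows "game_embedding e (tree_of_runs S', B \<inter> S') G"
  unfolding game_embedding_def fst_conv snd_conv
proof (intro conjI ballI)
  have sub: "tree_of_runs S' \<subseteq> tree_of_runs S" using S(2) by (rule tree_of_runs_mono)
  show "chronological e (tree_of_runs S') (fst G)"
    by (rule chronological_subset[OF _ sub]) (use e in \<open>simp add: game_embedding_def\<close>)
  show "inj_on e (tree_of_runs S')"
    by (rule inj_on_subset[OF _ sub]) (use e in \<open>simp add: game_embedding_def\<close>)
  fix R assume "R \<in> Run (tree_of_runs S')"
  then have "R \<in> S'" "R \<in> Run (tree_of_runs S)"
    using S Run_tree_of_runs[OF S(1)] Run_tree_of_runs[OF finite_subset[OF S(2,1)]] by auto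
  then show "fbar e R \<in> snd G \<longleftrightarrow> R \<in> B \<inter> S'" using e by (simp add: game_embedding_def)
qed

lemma game_embedding_along_run:
  assumes R: "R \<in> Run T" and AR: "r \<in> B \<longleftrightarrow> R \<in> A"
  shows "game_embedding (\<lambda>s. run_prefix R (length s)) (tree_of_runs {r}, B \<inter> {r}) (T, A)"
  unfolding game_embedding_def fst_conv snd_conv
proof (intro conjI ballI)
  show c: "chronological (\<lambda>s. run_prefix R (length s)) (tree_of_runs {r}) T"
    using R by (auto simp: chronological_def Run_def min.commute)
  show "inj_on (\<lambda>s. run_prefix R (length s)) (tree_of_runs {r})"
    by (auto simp: inj_on_def tree_of_runs_def) (metis length_run_prefix)
  fix Q assume "Q \<in> Run (tree_of_runs {r})"
  then have "Q = r" "Q \<in> Run (tree_of_runs {r})" using Run_tree_of_runs[of "{r}"] by auto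
  moreover have "fbar (\<lambda>s. run_prefix R (length s)) r = R"
    using run_prefix_fbar[OF c] \<open>Q \<in> Run (tree_of_runs {r})\<close> \<open>Q = r\<close> by (intro run_eqI) simp
  ultimately show "fbar (\<lambda>s. run_prefix R (length s)) Q \<in> A \<longleftrightarrow> Q \<in> B \<inter> {r}" using AR by auto
qed

text \<open>Universality supplies some embedding; homogeneity then moves the branch of r onto R.\<close>
lemma embedding_along_run:
  fixes T :: "'m list set" and S :: "(nat \<Rightarrow> nat) set"
  assumes G: "is_game (T, A)" "fin_universal TYPE(nat) (T, A)" "fin_ultrahomogeneous TYPE(nat) (T, A)"
    and S: "finite S" "B \<subseteq> S" "r \<in> S"
    and R: "R \<in> Run T" "r \<in> B \<longleftrightarrow> R \<in> A"
  shows "\<exists>e. game_embedding e (tree_of_runs S, B) (T, A) \<and> (\<forall>n. e (run_prefix r n) = run_prefix R n)"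
proof -
  obtain e0 where e0: "game_embedding e0 (tree_of_runs S, B) (T, A)"
    using G(2) finite_game_tree_of_runs[OF S(1,2)] unfolding fin_universal_def by blast
  have restricted: "game_embedding e0 (tree_of_runs {r}, B \<inter> {r}) (T, A)"
    using game_embedding_restrict[OF e0 S(1)] S(3) by simp
  have "finite_game (tree_of_runs {r}, B \<inter> {r})" by (rule finite_game_tree_of_runs) auto
  from G(3)[unfolded fin_ultrahomogeneous_def, rule_format, OF this restricted game_embedding_along_run[OF R]]
  obtain u where u: "game_iso u (T, A) (T, A)"
    and ue0: "\<forall>s\<in>tree_of_runs {r}. u (e0 s) = run_prefix R (length s)"
    by auto
  have "game_embedding (u \<circ> e0) (tree_of_runs S, B) (T, A)"
    using game_embedding_comp[OF e0 game_iso_imp_embedding[OF u]] G(1) by (simp add: is_game_def)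
  moreover have "(u \<circ> e0) (run_prefix r n) = run_prefix R n" for n
  proof -
    have "run_prefix r n \<in> tree_of_runs {r}" by (auto simp: tree_of_runs_def)
    then show ?thesis using ue0 by simp
  qed
  ultimately show ?thesis by blast
qed

lemma fin_universal_Nil:
  assumes T: "game_tree T" and U: "fin_universal TYPE(nat) (T, A)"
  shows "[] \<in> T"
proof -
  have "finite_game (tree_of_runs {\<lambda>_::nat. 0::nat}, {})" by (rule finite_game_tree_of_runs) auto
  then obtain e where "chronological e (tree_of_runs {\<lambda>_::nat. 0::nat}) T"
    using U unfolding fin_universal_def game_embedding_def by fastforce
  moreover have "[] \<in> tree_of_runs {\<lambda>_::nat. 0::nat}"
    unfolding tree_of_runs_def by (metis (mono_tags) mem_Collect_eq run_prefix_0 singletonI)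
  ultimately show ?thesis using game_tree_Nil[OF T] chronologicalD(1) by blast
qed

text \<open>A run through t that is missing from A is traded for a winning run branching off it after t.\<close>
lemma winning_run_through:
  fixes T :: "'m list set"
  assumes G: "is_game (T, A)" "fin_universal TYPE(nat) (T, A)" "fin_ultrahomogeneous TYPE(nat) (T, A)"
    and t: "t \<in> T"
  shows "\<exists>R\<in>A. run_prefix R (length t) = t"
proof -
  have "game_tree T" using G(1) by (simp add: is_game_def)
  then obtain R where R: "R \<in> Run T" "run_prefix R (length t) = t"
    using game_tree_run_through t by blast
  show ?thesis
  proof (cases "R \<in> A")
    case False
    define r1 :: "nat \<Rightarrow> nat" where "r1 = (\<lambda>_. 0)"
    define r2 :: "nat \<Rightarrow> nat" where "r2 = (\<lambda>i. if i = length t then 1 else 0)"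
    have "r1 \<noteq> r2" by (auto simp: r1_def r2_def fun_eq_iff)
    then have "\<exists>e. game_embedding e (tree_of_runs {r1, r2}, {r2}) (T, A)
        \<and> (\<forall>n. e (run_prefix r1 n) = run_prefix R n)"
      by (intro embedding_along_run[OF G]) (use R False in auto)
    then obtain e where e: "game_embedding e (tree_of_runs {r1, r2}, {r2}) (T, A)"
      and er1: "e (run_prefix r1 (length t)) = t"
      using R(2) by metis
    have r2: "r2 \<in> Run (tree_of_runs {r1, r2})" using Run_tree_of_runs[of "{r1, r2}"] by simp
    then have "fbar e r2 \<in> A" using e by (simp add: game_embedding_def)
    moreover have "run_prefix (fbar e r2) (length t) = t"
    proof -
      have ce: "chronological e (tree_of_runs {r1, r2}) T" using e by (simp add: game_embedding_def)
      have "run_prefix r2 (length t) = run_prefix r1 (length t)"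
        by (simp add: run_prefix_eq_iff r1_def r2_def)
      then show ?thesis using run_prefix_fbar[OF ce r2] er1 by simp
    qed
    ultimately show ?thesis by blast
  qed (use R in blast)
qed

text \<open>The runs r j, which agree except for the move j after t, are mapped through t to distinct children.\<close>
lemma infinite_children:
  fixes T :: "'m list set"
  assumes G: "is_game (T, A)" "fin_universal TYPE(nat) (T, A)" "fin_ultrahomogeneous TYPE(nat) (T, A)"
    and t: "t \<in> T"
  shows "infinite (children T t)"
proof
  assume fin: "finite (children T t)"
  define m where "m = card (children T t)"
  have "game_tree T" using G(1) by (simp add: is_game_def)
  then obtain R where R: "R \<in> Run T" "run_prefix R (length t) = t"
    using game_tree_run_through t by blast
  define r :: "nat \<Rightarrow> nat \<Rightarrow> nat" where "r j = (\<lambda>i. if i = length t then j else 0)" for j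
  define B where "B = (if R \<in> A then r ` {..m} else {})"
  have "\<exists>e. game_embedding e (tree_of_runs (r ` {..m}), B) (T, A)
      \<and> (\<forall>n. e (run_prefix (r 0) n) = run_prefix R n)"
    by (intro embedding_along_run[OF G]) (use R in \<open>auto simp: B_def\<close>)
  then obtain e where e: "game_embedding e (tree_of_runs (r ` {..m}), B) (T, A)"
    and er0: "e (run_prefix (r 0) (length t)) = t"
    using R(2) by metis
  have ce: "chronological e (tree_of_runs (r ` {..m})) T" and ie: "inj_on e (tree_of_runs (r ` {..m}))"
    using e by (simp_all add: game_embedding_def)
  have node: "run_prefix (r j) k \<in> tree_of_runs (r ` {..m})" if "j \<le> m" for j k
    using that by (auto simp: tree_of_runs_def)
  define h where "h j = last (e (run_prefix (r j) (Suc (length t))))" for j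
  have e_r: "e (run_prefix (r j) (Suc (length t))) = t @ [h j]" if "j \<le> m" for j
  proof -
    have "run_prefix (r j) (Suc (length t)) = run_prefix (r 0) (length t) @ [j]"
      by (simp add: run_prefix_Suc run_prefix_eq_iff r_def)
    moreover have "e (run_prefix (r 0) (length t) @ [j])
        = e (run_prefix (r 0) (length t)) @ [last (e (run_prefix (r 0) (length t) @ [j]))]"
      using chronological_snoc[OF ce] node[OF that, of "Suc (length t)"] calculation by metis
    ultimately show ?thesis using er0 by (simp add: h_def)
  qed
  have "h ` {..m} \<subseteq> children T t"
  proof (intro image_subsetI)
    fix j assume "j \<in> {..m}"
    then have "e (run_prefix (r j) (Suc (length t))) \<in> T" using chronologicalD(1)[OF ce node] by simp
    then show "h j \<in> children T t" using e_r \<open>j \<in> {..m}\<close> by (simp add: children_def)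
  qed
  moreover have "inj_on h {..m}"
  proof
    fix i j assume "i \<in> {..m}" "j \<in> {..m}" "h i = h j"
    then have "e (run_prefix (r i) (Suc (length t))) = e (run_prefix (r j) (Suc (length t)))"
      using e_r by simp
    then have "run_prefix (r i) (Suc (length t)) = run_prefix (r j) (Suc (length t))"
      using inj_onD[OF ie] node \<open>i \<in> {..m}\<close> \<open>j \<in> {..m}\<close> by simp
    then have "r i (length t) = r j (length t)" by (simp add: run_prefix_eq_iff)
    then show "i = j" by (simp add: r_def)
  qed
  ultimately have "card {..m} \<le> m" unfolding m_def using card_inj_on_le fin by blast
  then show False by simp
qed

lemma games_isomorphic_G_FL_if_branching_dense:
  fixes T :: "'m list set"
  assumes T: "game_tree T" "countable T" "[] \<in> T" and A: "A \<subseteq> Run T" "countable A"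
    and branching: "\<And>t. t \<in> T \<Longrightarrow> infinite (children T t)"
    and dense: "\<And>t. t \<in> T \<Longrightarrow> \<exists>R\<in>A. run_prefix R (length t) = t"
  shows "games_isomorphic (T, A) G_FL"
proof -
  obtain a :: "nat \<Rightarrow> nat \<Rightarrow> 'm" and J where enum: "a ` J = A" using A(2) by (rule countable_enumeration)
  let ?h = "leader_relabel a J T"
  have "extenders a J t \<noteq> {}" if "t \<in> T" for t
    using dense[OF that] enum by (force simp: extenders_def)
  then have "bij_betw ?h T UNIV" using bij_leader_relabel[OF T] A(1) branching enum by simp
  then have "bij_betw ?h (fst (T, A)) (fst G_FL)" by (simp add: G_FL_def)
  moreover have "game_embedding ?h (T, A) G_FL" using leader_relabel_embedding[OF T(1,2)] enum by metis
  moreover have "is_game (T, A)" using T(1) A(1) by (simp add: is_game_def)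
  ultimately have "game_iso ?h (T, A) G_FL" using game_iso_if_bij_embedding is_game_G_FL by blast
  then show ?thesis by (auto simp: games_isomorphic_def)
qed

theorem mainTheorem6:
  fixes G :: "'m list set \<times> (nat \<Rightarrow> 'm) set"
  shows "is_game G_FL \<and> countable_game G_FL
         \<and> fin_universal TYPE('c) G_FL \<and> fin_ultrahomogeneous TYPE('c) G_FL
         \<and> (is_game G \<and> countable_game G \<and> fin_universal TYPE(nat) G
              \<and> fin_ultrahomogeneous TYPE(nat) G \<longrightarrow> games_isomorphic G G_FL)"
proof (intro conjI impI)
  show "is_game G_FL" "countable_game G_FL" by (fact is_game_G_FL countable_game_G_FL)+
  show "fin_universal TYPE('c) G_FL" "fin_ultrahomogeneous TYPE('c) G_FL"
    by (fact G_FL_universal G_FL_ultrahomogeneous)+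
next
  obtain T A where G: "G = (T, A)" by fastforce
  assume "is_game G \<and> countable_game G \<and> fin_universal TYPE(nat) G \<and> fin_ultrahomogeneous TYPE(nat) G"
  then have props: "is_game (T, A)" "fin_universal TYPE(nat) (T, A)" "fin_ultrahomogeneous TYPE(nat) (T, A)"
    and "game_tree T" "A \<subseteq> Run T" "countable T" "countable A"
    using G by (auto simp: is_game_def countable_game_def)
  then show "games_isomorphic G G_FL" unfolding G
    using games_isomorphic_G_FL_if_branching_dense fin_universal_Nil winning_run_through[OF props]
      infinite_children[OF props] by blast
qed

end
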